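(* Let $\mathcal{T}$ be one of the following spaces of real-valued functions on $\mathbb{R}^d$, equipped with its natural topology: the Schwartz space $\mathcal{S}(\mathbb{R}^d)$, a space $L^p(\mathbb{R}^d)$ with $p>0$, or an intersection $L^p(\mathbb{R}^d)\cap L^q(\mathbb{R}^d)$ with $p,q>0$. Let $f$ be a Lévy exponent such that, for every $\varphi\in\mathcal{T}$, the function $\mathbf{r}\mapsto f(\varphi(\mathbf{r}))$ is in $L^1(\mathbb{R}^d)$, and such that the functional $\widehat{\mathscr{P}}(\varphi)=\exp\left(\int_{\mathbb{R}^d} f(\varphi(\mathbf{r}))\,\mathrm{d}\mathbf{r}\right)$ is continuous on $\mathcal{T}$. Then $\widehat{\mathscr{P}}$ is positive-definite on $\mathcal{T}$: for all $N\in\mathbb{N}$, $a_1,\dots,a_N\in\mathbb{C}$ and $\varphi_1,\dots,\varphi_N\in\mathcal{T}$, $\sum_{i,j=1}^N a_i\overline{a_j}\,\widehat{\mathscr{P}}(\varphi_i-\varphi_j)\ge 0$.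
   Context: A Lévy exponent is a function $f:\mathbb{R}\to\mathbb{C}$ of the form $f(\omega)=\mathrm{j}\mu\omega-\frac{\sigma^2\omega^2}{2}+\int_{\mathbb{R}\setminus\{0\}}\left(\mathrm{e}^{\mathrm{j}a\omega}-1-\mathrm{j}\omega a\mathbb{1}_{|a|<1}\right)V(\mathrm{d}a)$, where $\mathrm{j}=\sqrt{-1}$, $\mu\in\mathbb{R}$, $\sigma^2\ge 0$, and $V$ is a Lévy measure, i.e. a Radon measure on $\mathbb{R}\setminus\{0\}$ with $\int_{\mathbb{R}\setminus\{0\}}\min(1,a^2)V(\mathrm{d}a)<\infty$; $(\mu,\sigma^2,V)$ is its Lévy triplet. For $p\ge1$, $L^p$ carries its usual norm; for $0<p<1$, $L^p$ is the complete metric space with metric $d_p(f,g)=\int_{\mathbb{R}^d}|f-g|^p$; $L^p\cap L^q$ carries the topology given by the sum of the two corresponding metrics/norms (e.g. $d_p(f,g)+\|f-g\|_q$ if $p<1\le q$). *)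

theory Defs
  imports "HOL-Analysis.Analysis"
begin

text \<open>A Levy measure: a measure on the Borel sets of the real line that gives no mass
  to the origin (i.e. a measure on R minus 0) with finite integral of min(1,a^2).\<close>
definition levy_measure :: "real measure \<Rightarrow> bool" where
  "levy_measure V \<longleftrightarrow> sets V = sets borel \<and> emeasure V {0} = 0 \<and>
     (\<integral>\<^sup>+ a. ennreal (min 1 (a\<^sup>2)) \<partial>V) < \<infinity>"

definition levy_exponent :: "(real \<Rightarrow> complex) \<Rightarrow> bool" where
  "levy_exponent f \<longleftrightarrow> (\<exists>\<mu> \<sigma>2 V. \<sigma>2 \<ge> 0 \<and> levy_measure V \<and>
     (\<forall>\<omega>. f \<omega> = \<i> * of_real \<mu> * of_real \<omega> - of_real (\<sigma>2 * \<omega>\<^sup>2 / 2)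
        + (\<integral> a. (exp (\<i> * of_real a * of_real \<omega>) - 1
                   - \<i> * of_real \<omega> * of_real a * of_real (indicator {a. \<bar>a\<bar> < 1} a)) \<partial>V)))"

definition Lp_space :: "real \<Rightarrow> ('a::euclidean_space \<Rightarrow> real) set" where
  "Lp_space p = {\<phi>. \<phi> \<in> borel_measurable lborel \<and> integrable lborel (\<lambda>x. \<bar>\<phi> x\<bar> powr p)}"

definition Lp_dist :: "real \<Rightarrow> ('a::euclidean_space \<Rightarrow> real) \<Rightarrow> ('a \<Rightarrow> real) \<Rightarrow> real" where
  "Lp_dist p \<phi> \<psi> = (if p < 1 then (\<integral>x. \<bar>\<phi> x - \<psi> x\<bar> powr p \<partial>lborel)
                     else (\<integral>x. \<bar>\<phi> x - \<psi> x\<bar> powr p \<partial>lborel) powr (1 / p))"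

definition dirderiv :: "'a::euclidean_space \<Rightarrow> ('a \<Rightarrow> real) \<Rightarrow> 'a \<Rightarrow> real" where
  "dirderiv b g x = deriv (\<lambda>t. g (x + t *\<^sub>R b)) 0"

fun pderivs :: "'a::euclidean_space list \<Rightarrow> ('a \<Rightarrow> real) \<Rightarrow> 'a \<Rightarrow> real" where
  "pderivs [] g = g"
| "pderivs (b # bs) g = dirderiv b (pderivs bs g)"

definition schwartz_space :: "('a::euclidean_space \<Rightarrow> real) set" where
  "schwartz_space = {\<phi>.
     (\<forall>bs. set bs \<subseteq> Basis \<longrightarrow> (\<forall>x. pderivs bs \<phi> differentiable (at x))) \<and>
     (\<forall>k::nat. \<forall>bs. set bs \<subseteq> Basis \<longrightarrow>
        bounded (range (\<lambda>x. (1 + norm x) ^ k * pderivs bs \<phi> x)))}"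

definition schwartz_seminorm :: "nat \<Rightarrow> 'a::euclidean_space list \<Rightarrow> ('a \<Rightarrow> real) \<Rightarrow> real" where
  "schwartz_seminorm k bs \<phi> = (SUP x. (1 + norm x) ^ k * \<bar>pderivs bs \<phi> x\<bar>)"

definition schwartz_conv :: "(nat \<Rightarrow> 'a::euclidean_space \<Rightarrow> real) \<Rightarrow> ('a \<Rightarrow> real) \<Rightarrow> bool" where
  "schwartz_conv s \<phi> \<longleftrightarrow> (\<forall>k bs. set bs \<subseteq> Basis \<longrightarrow>
      (\<lambda>n. schwartz_seminorm k bs (s n - \<phi>)) \<longlonglongrightarrow> 0)"

text \<open>T with sequential convergence conv is one of: S(R^d); L^p (p>0); L^p \<inter> L^q (p,q>0)
  with the sum of the two metrics. All are metrizable, so continuity = sequential continuity.\<close>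
definition test_space :: "('a::euclidean_space \<Rightarrow> real) set \<Rightarrow>
    ((nat \<Rightarrow> 'a \<Rightarrow> real) \<Rightarrow> ('a \<Rightarrow> real) \<Rightarrow> bool) \<Rightarrow> bool" where
  "test_space T conv \<longleftrightarrow>
     (T = schwartz_space \<and> conv = schwartz_conv) \<or>
     (\<exists>p>0. T = Lp_space p \<and> conv = (\<lambda>s \<phi>. (\<lambda>n. Lp_dist p (s n) \<phi>) \<longlonglongrightarrow> 0)) \<or>
     (\<exists>p>0. \<exists>q>0. T = Lp_space p \<inter> Lp_space q \<and>
        conv = (\<lambda>s \<phi>. (\<lambda>n. Lp_dist p (s n) \<phi> + Lp_dist q (s n) \<phi>) \<longlonglongrightarrow> 0))"

definition seq_continuous_on ::
  "('b set) \<Rightarrow> ((nat \<Rightarrow> 'b) \<Rightarrow> 'b \<Rightarrow> bool) \<Rightarrow> ('b \<Rightarrow> complex) \<Rightarrow> bool" where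
  "seq_continuous_on T conv F \<longleftrightarrow>
     (\<forall>s \<phi>. (\<forall>n. s n \<in> T) \<longrightarrow> \<phi> \<in> T \<longrightarrow> conv s \<phi> \<longrightarrow> (\<lambda>n. F (s n)) \<longlonglongrightarrow> F \<phi>)"

definition char_functional :: "(real \<Rightarrow> complex) \<Rightarrow> ('a::euclidean_space \<Rightarrow> real) \<Rightarrow> complex" where
  "char_functional f \<phi> = exp (\<integral>r. f (\<phi> r) \<partial>lborel)"

end

theory Submission
  imports Defs "HOL-Probability.Characteristic_Functions"
begin

text \<open>By the Levy-Khintchine form, \<open>f\<close> is conditionally positive definite: for real points
  \<open>x\<^sub>1, \<dots>, x\<^sub>N\<close> and coefficients \<open>c\<close> with \<open>\<Sum>c\<^sub>i = 0\<close> one has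
  \<open>\<Sum>c\<^sub>i cnj c\<^sub>j f (x\<^sub>i - x\<^sub>j) \<ge> 0\<close>, since the drift term is annihilated by the zero-sum condition,
  the Gaussian term contributes \<open>\<sigma>\<^sup>2 |\<Sum>c\<^sub>i x\<^sub>i|\<^sup>2\<close> and each jump integrand contributes
  \<open>|\<Sum>c\<^sub>i exp (j a x\<^sub>i)|\<^sup>2\<close>. Taking \<open>x\<^sub>i = \<phi>\<^sub>i r\<close> and integrating over \<open>r\<close>, the matrix
  \<open>K\<^sub>i\<^sub>j = \<integral> f (\<phi>\<^sub>i - \<phi>\<^sub>j)\<close> is conditionally positive definite, so by Schoenberg's theorem
  \<open>exp K\<close> is positive semidefinite; Schoenberg's theorem itself follows from the Schur product
  theorem and the exponential series.\<close>

definition quad_form :: "nat \<Rightarrow> (nat \<Rightarrow> complex) \<Rightarrow> (nat \<Rightarrow> nat \<Rightarrow> complex) \<Rightarrow> complex" where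
  "quad_form N c K = (\<Sum>i<N. \<Sum>j<N. c i * cnj (c j) * K i j)"

definition hermitian_kernel :: "nat \<Rightarrow> (nat \<Rightarrow> nat \<Rightarrow> complex) \<Rightarrow> bool" where
  "hermitian_kernel N K \<longleftrightarrow> (\<forall>i<N. \<forall>j<N. K j i = cnj (K i j))"

definition pos_semidef :: "nat \<Rightarrow> (nat \<Rightarrow> nat \<Rightarrow> complex) \<Rightarrow> bool" where
  "pos_semidef N K \<longleftrightarrow> hermitian_kernel N K \<and> (\<forall>c. 0 \<le> quad_form N c K)"

definition cond_pos_semidef :: "nat \<Rightarrow> (nat \<Rightarrow> nat \<Rightarrow> complex) \<Rightarrow> bool" where
  "cond_pos_semidef N K \<longleftrightarrow>
     hermitian_kernel N K \<and> (\<forall>c. sum c {..<N} = 0 \<longrightarrow> 0 \<le> quad_form N c K)"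

lemma hermitian_kernelD:
  "hermitian_kernel N K \<Longrightarrow> i < N \<Longrightarrow> j < N \<Longrightarrow> K j i = cnj (K i j)"
  unfolding hermitian_kernel_def by blast

lemma hermitian_kernelI:
  "(\<And>i j. i < N \<Longrightarrow> j < N \<Longrightarrow> K j i = cnj (K i j)) \<Longrightarrow> hermitian_kernel N K"
  unfolding hermitian_kernel_def by blast

lemma hermitian_kernel_mono: "hermitian_kernel N K \<Longrightarrow> M \<le> N \<Longrightarrow> hermitian_kernel M K"
  unfolding hermitian_kernel_def using order_less_le_trans by blast

lemma hermitian_kernel_rank_one: "hermitian_kernel N (\<lambda>i j. w i * cnj (w j))"
  by (simp add: hermitian_kernel_def)

lemma hermitian_kernel_diff:
  assumes "hermitian_kernel N K" "hermitian_kernel N L"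
  shows "hermitian_kernel N (\<lambda>i j. K i j - L i j)"
proof (rule hermitian_kernelI)
  fix i j assume "i < N" "j < N"
  with assms have "K j i = cnj (K i j)" "L j i = cnj (L i j)"
    by (blast intro: hermitian_kernelD)+
  then show "K j i - L j i = cnj (K i j - L i j)"
    by simp
qed

lemma pos_semidef_hermitian: "pos_semidef N K \<Longrightarrow> hermitian_kernel N K"
  unfolding pos_semidef_def by blast

lemma pos_semidef_nonneg: "pos_semidef N K \<Longrightarrow> 0 \<le> quad_form N c K"
  unfolding pos_semidef_def by blast

lemma cond_pos_semidef_hermitian: "cond_pos_semidef N K \<Longrightarrow> hermitian_kernel N K"
  unfolding cond_pos_semidef_def by blast

lemma cond_pos_semidef_nonneg:
  "cond_pos_semidef N K \<Longrightarrow> sum c {..<N} = 0 \<Longrightarrow> 0 \<le> quad_form N c K"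
  unfolding cond_pos_semidef_def by blast

lemma mult_cnj_nonneg: "0 \<le> z * cnj z"
  by (simp add: less_eq_complex_def)

lemma quad_form_cong:
  "(\<And>i j. i < N \<Longrightarrow> j < N \<Longrightarrow> K i j = L i j) \<Longrightarrow> quad_form N c K = quad_form N c L"
  by (simp add: quad_form_def)

lemma quad_form_coeff_cong:
  "(\<And>i. i < N \<Longrightarrow> c i = d i) \<Longrightarrow> quad_form N c K = quad_form N d K"
  by (simp add: quad_form_def)

lemma quad_form_fun_upd_outside: "N \<le> n \<Longrightarrow> quad_form N (c(n := t)) K = quad_form N c K"
  by (rule quad_form_coeff_cong) simp

lemma quad_form_add: "quad_form N c (\<lambda>i j. K i j + L i j) = quad_form N c K + quad_form N c L"
  by (simp add: quad_form_def distrib_left sum.distrib)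

lemma quad_form_diff: "quad_form N c (\<lambda>i j. K i j - L i j) = quad_form N c K - quad_form N c L"
  by (simp add: quad_form_def right_diff_distrib sum_subtractf)

lemma quad_form_scale: "quad_form N c (\<lambda>i j. z * K i j) = z * quad_form N c K"
  by (simp add: quad_form_def sum_distrib_left mult_ac)

lemma quad_form_sum:
  "quad_form N c (\<lambda>i j. \<Sum>k\<in>S. K k i j) = (\<Sum>k\<in>S. quad_form N c (K k))"
  unfolding quad_form_def sum_distrib_left by (simp add: sum.swap[where B = S])

lemma quad_form_rank_one:
  "quad_form N c (\<lambda>i j. w i * cnj (w j)) = (\<Sum>i<N. c i * w i) * cnj (\<Sum>i<N. c i * w i)"
  by (simp add: quad_form_def sum_product mult_ac)

lemma quad_form_mult_coeffs:
  "quad_form N (\<lambda>i. c i * d i) K = quad_form N c (\<lambda>i j. d i * cnj (d j) * K i j)"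
  by (simp add: quad_form_def mult_ac)

lemma quad_form_row: "quad_form N c (\<lambda>i j. X i) = (\<Sum>i<N. c i * X i) * cnj (sum c {..<N})"
  unfolding quad_form_def cnj_sum by (simp add: sum_distrib_left sum_distrib_right mult_ac)

lemma quad_form_col: "quad_form N c (\<lambda>i j. Y j) = sum c {..<N} * (\<Sum>j<N. cnj (c j) * Y j)"
  unfolding quad_form_def by (simp only: sum_product mult.assoc)

lemma quad_form_Suc:
  "quad_form (Suc N) c K = quad_form N c K + (\<Sum>i<N. c i * K i N) * cnj (c N)
     + c N * (\<Sum>j<N. cnj (c j) * K N j) + c N * cnj (c N) * K N N"
  unfolding quad_form_def by (simp add: sum.distrib sum_distrib_left sum_distrib_right mult_ac)

lemma pos_semidef_rank_one: "pos_semidef N (\<lambda>i j. w i * cnj (w j))"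
  unfolding pos_semidef_def quad_form_rank_one
  by (simp add: hermitian_kernel_rank_one mult_cnj_nonneg del: cnj_sum)

lemma quad_form_unit:
  "i < N \<Longrightarrow> quad_form N (\<lambda>k. if k = i then 1 else 0) A = A i i"
  unfolding quad_form_def by (simp add: sum.remove[of _ i])

lemma pos_semidef_diag_nonneg:
  assumes "pos_semidef N A" "i < N"
  shows "0 \<le> A i i"
proof -
  have "0 \<le> quad_form N (\<lambda>k. if k = i then 1 else 0) A"
    using assms(1) by (rule pos_semidef_nonneg)
  with assms(2) show ?thesis
    by (simp add: quad_form_unit)
qed

lemma pos_semidef_restrict:
  assumes "pos_semidef (Suc N) A"
  shows "pos_semidef N A"
  unfolding pos_semidef_def
proof (intro conjI allI)
  show "hermitian_kernel N A"
    using pos_semidef_hermitian[OF assms] by (rule hermitian_kernel_mono) simp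
  fix c
  have "0 \<le> quad_form (Suc N) (c(N := 0)) A"
    using assms by (rule pos_semidef_nonneg)
  also have "quad_form (Suc N) (c(N := 0)) A = quad_form N c A"
    by (simp only: quad_form_Suc fun_upd_same quad_form_fun_upd_outside order_refl) simp
  finally show "0 \<le> quad_form N c A" .
qed

text \<open>A zero diagonal entry forces its column to vanish: otherwise the form is negative at
  \<open>e\<^sub>i - s A\<^sub>i\<^sub>N e\<^sub>N\<close> for large real \<open>s\<close>.\<close>
lemma pos_semidef_zero_diag_col:
  assumes A: "pos_semidef (Suc N) A" and AN: "A N N = 0" and i: "i < N"
  shows "A i N = 0"
proof (rule ccontr)
  assume "A i N \<noteq> 0"
  define m where "m = (cmod (A i N))\<^sup>2"
  have "m > 0"
    unfolding m_def using \<open>A i N \<noteq> 0\<close> by simp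
  define s where "s = (Re (A i i) + 1) / (2 * m)"
  define c where "c k = (if k = i then 1 else if k = N then - of_real s * A i N else 0)" for k
  have "A N i = cnj (A i N)"
    using i by (intro hermitian_kernelD[OF pos_semidef_hermitian[OF A]]) simp_all
  have "quad_form N c A = quad_form N (\<lambda>k. if k = i then 1 else 0) A"
    by (rule quad_form_coeff_cong) (simp add: c_def)
  then have "quad_form N c A = A i i"
    using i by (simp add: quad_form_unit)
  moreover have "(\<Sum>k<N. c k * A k N) = A i N"
  proof -
    have "(\<Sum>k<N. c k * A k N) = (\<Sum>k<N. if k = i then A k N else 0)"
      by (intro sum.cong) (auto simp: c_def)
    then show ?thesis using i by simp
  qed
  moreover have "(\<Sum>k<N. cnj (c k) * A N k) = A N i"
  proof -
    have "(\<Sum>k<N. cnj (c k) * A N k) = (\<Sum>k<N. if k = i then A N k else 0)"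
      by (intro sum.cong) (auto simp: c_def)
    then show ?thesis using i by simp
  qed
  moreover have "c N = - of_real s * A i N"
    using i by (simp add: c_def)
  ultimately have "quad_form (Suc N) c A = A i i - 2 * of_real s * (A i N * cnj (A i N))"
    using AN \<open>A N i = cnj (A i N)\<close> by (simp add: quad_form_Suc algebra_simps)
  also have "A i N * cnj (A i N) = of_real m"
    unfolding m_def complex_norm_square ..
  finally have "Re (quad_form (Suc N) c A) = Re (A i i) - 2 * s * m"
    by simp
  moreover have "2 * s * m = Re (A i i) + 1"
    unfolding s_def using \<open>m > 0\<close> by simp
  moreover have "0 \<le> quad_form (Suc N) c A"
    using A by (rule pos_semidef_nonneg)
  ultimately show False
    by (simp add: less_eq_complex_def)
qed

text \<open>One step of a Cholesky-type factorisation: \<open>w\<close> is the last column scaled by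
  \<open>1 / sqrt (A N N)\<close>, or zero if \<open>A N N = 0\<close>.\<close>
lemma pos_semidef_Suc_split:
  assumes A: "pos_semidef (Suc N) A"
  obtains w where "pos_semidef N (\<lambda>i j. A i j - w i * cnj (w j))"
    and "\<And>i. i < Suc N \<Longrightarrow> A i N = w i * cnj (w N)"
proof -
  have herm: "hermitian_kernel (Suc N) A"
    using A by (rule pos_semidef_hermitian)
  define d where "d = Re (A N N)"
  have "0 \<le> A N N"
    using A by (rule pos_semidef_diag_nonneg) simp
  then have AN: "A N N = of_real d" and "0 \<le> d"
    unfolding d_def by (simp_all add: less_eq_complex_def complex_eq_iff)
  show thesis
  proof (cases "d = 0")
    case True
    show thesis
    proof (rule that[of "\<lambda>_. 0"])
      show "pos_semidef N (\<lambda>i j. A i j - 0 * cnj 0)"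
        using pos_semidef_restrict[OF A] by simp
      show "A i N = 0 * cnj 0" if "i < Suc N" for i
        using that AN True pos_semidef_zero_diag_col[OF A] by (cases "i = N") auto
    qed
  next
    case False
    then have "0 < d"
      using \<open>0 \<le> d\<close> by simp
    define w where "w i = A i N / of_real (sqrt d)" for i
    have sqrt_sq: "of_real (sqrt d) * of_real (sqrt d) = (of_real d :: complex)"
      using \<open>0 \<le> d\<close> by (simp flip: of_real_mult)
    have "cnj (w N) = of_real (sqrt d)"
      using \<open>0 < d\<close> sqrt_sq by (simp add: w_def AN field_simps)
    then have col: "A i N = w i * cnj (w N)" for i
      using \<open>0 < d\<close> by (simp add: w_def)
    have "0 \<le> quad_form N c (\<lambda>i j. A i j - w i * cnj (w j))" for c
    proof -
      define u where "u = (\<Sum>i<N. c i * A i N)"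
      define t where "t = - u / of_real d"
      have row: "(\<Sum>j<N. cnj (c j) * A N j) = cnj u"
        unfolding u_def cnj_sum
        by (intro sum.cong refl) (simp add: hermitian_kernelD[OF herm, of _ N])
      have "(\<Sum>i<N. c i * w i) = u / of_real (sqrt d)"
        unfolding w_def u_def by (simp add: sum_divide_distrib)
      then have "quad_form N c (\<lambda>i j. A i j - w i * cnj (w j))
          = quad_form N c A - u / of_real (sqrt d) * cnj (u / of_real (sqrt d))"
        by (simp only: quad_form_diff quad_form_rank_one)
      also have "\<dots> = quad_form N c A - u * cnj u / of_real d"
        using sqrt_sq by (simp add: field_simps)
      also have "\<dots> = quad_form (Suc N) (c(N := t)) A"
        using \<open>0 < d\<close> row
        by (simp only: quad_form_Suc fun_upd_same quad_form_fun_upd_outside order_refl)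
           (simp add: t_def u_def AN field_simps)
      finally show ?thesis
        using pos_semidef_nonneg[OF A] by simp
    qed
    moreover have "hermitian_kernel N (\<lambda>i j. A i j - w i * cnj (w j))"
      by (intro hermitian_kernel_diff hermitian_kernel_rank_one hermitian_kernel_mono[OF herm]) simp
    ultimately show thesis
      by (intro that[of w] col) (simp add: pos_semidef_def)
  qed
qed

lemma pos_semidef_gram:
  "pos_semidef N A \<Longrightarrow> \<exists>w. \<forall>i<N. \<forall>j<N. A i j = (\<Sum>k<N. w k i * cnj (w k j))"
proof (induction N arbitrary: A)
  case 0
  then show ?case by simp
next
  case (Suc N A)
  obtain v where B: "pos_semidef N (\<lambda>i j. A i j - v i * cnj (v j))"
    and col: "\<And>i. i < Suc N \<Longrightarrow> A i N = v i * cnj (v N)"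
    using pos_semidef_Suc_split[OF Suc.prems] by blast
  obtain w where w: "\<And>i j. i < N \<Longrightarrow> j < N \<Longrightarrow> A i j - v i * cnj (v j) = (\<Sum>k<N. w k i * cnj (w k j))"
    using Suc.IH[OF B] by blast
  have herm: "hermitian_kernel (Suc N) A"
    using Suc.prems by (rule pos_semidef_hermitian)
  define W where "W k = (if k < N then (\<lambda>i. if i < N then w k i else 0) else v)" for k
  have "A i j = (\<Sum>k<Suc N. W k i * cnj (W k j))" if i: "i < Suc N" and j: "j < Suc N" for i j
  proof -
    have W_sum: "(\<Sum>k<Suc N. W k i * cnj (W k j))
        = (\<Sum>k<N. (if i < N then w k i else 0) * cnj (if j < N then w k j else 0)) + v i * cnj (v j)"
      by (simp add: W_def)
    consider "i < N" "j < N" | "i = N" | "j = N"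
      using i j unfolding less_Suc_eq by blast
    then show ?thesis
    proof cases
      case 1
      have "A i j = (A i j - v i * cnj (v j)) + v i * cnj (v j)"
        by simp
      with 1 show ?thesis
        unfolding W_sum by (simp add: w)
    next
      case 2
      have "A N j = cnj (A j N)"
        using hermitian_kernelD[OF herm, of j N] j by simp
      with 2 j show ?thesis
        unfolding W_sum by (simp add: col)
    next
      case 3
      with i show ?thesis
        unfolding W_sum by (simp add: col)
    qed
  qed
  then show ?case
    by blast
qed

lemma pos_semidef_mult:
  assumes A: "pos_semidef N A" and B: "pos_semidef N B"
  shows "pos_semidef N (\<lambda>i j. A i j * B i j)"
proof -
  have "hermitian_kernel N (\<lambda>i j. A i j * B i j)"
  proof (rule hermitian_kernelI)
    fix i j assume "i < N" "j < N"
    then have "A j i = cnj (A i j)" "B j i = cnj (B i j)"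
      using A B by (blast intro: hermitian_kernelD pos_semidef_hermitian)+
    then show "A j i * B j i = cnj (A i j * B i j)"
      by simp
  qed
  moreover have "0 \<le> quad_form N c (\<lambda>i j. A i j * B i j)" for c
  proof -
    obtain w where w: "\<And>i j. i < N \<Longrightarrow> j < N \<Longrightarrow> B i j = (\<Sum>k<N. w k i * cnj (w k j))"
      using pos_semidef_gram[OF B] by blast
    have "quad_form N c (\<lambda>i j. A i j * B i j)
        = quad_form N c (\<lambda>i j. \<Sum>k<N. w k i * cnj (w k j) * A i j)"
      by (rule quad_form_cong) (simp add: w sum_distrib_left sum_distrib_right mult_ac)
    also have "\<dots> = (\<Sum>k<N. quad_form N (\<lambda>i. c i * w k i) A)"
      by (simp add: quad_form_sum quad_form_mult_coeffs)
    finally show ?thesis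
      by (simp add: sum_nonneg pos_semidef_nonneg[OF A])
  qed
  ultimately show ?thesis
    by (simp add: pos_semidef_def)
qed

lemma pos_semidef_power: "pos_semidef N A \<Longrightarrow> pos_semidef N (\<lambda>i j. A i j ^ n)"
proof (induction n)
  case 0
  then show ?case
    using pos_semidef_rank_one[of N "\<lambda>_. 1"] by simp
next
  case (Suc n)
  then show ?case
    using pos_semidef_mult[of N A] by simp
qed

lemma closed_complex_nonneg: "closed {z::complex. 0 \<le> z}"
  unfolding less_eq_complex_def
  by (intro closed_Collect_conj closed_Collect_le closed_Collect_eq continuous_intros)

lemma pos_semidef_exp:
  assumes A: "pos_semidef N A"
  shows "pos_semidef N (\<lambda>i j. exp (A i j))"
proof -
  have "hermitian_kernel N (\<lambda>i j. exp (A i j))"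
  proof (rule hermitian_kernelI)
    fix i j assume "i < N" "j < N"
    then have "A j i = cnj (A i j)"
      using A by (blast intro: hermitian_kernelD pos_semidef_hermitian)
    then show "exp (A j i) = cnj (exp (A i j))"
      by (simp add: exp_cnj)
  qed
  moreover have "0 \<le> quad_form N c (\<lambda>i j. exp (A i j))" for c
  proof -
    define X where "X n = quad_form N c (\<lambda>i j. A i j ^ n /\<^sub>R fact n)" for n
    have "X sums quad_form N c (\<lambda>i j. exp (A i j))"
      unfolding X_def quad_form_def by (intro sums_sum sums_mult exp_converges)
    then have lim: "(\<lambda>n. \<Sum>k<n. X k) \<longlonglongrightarrow> quad_form N c (\<lambda>i j. exp (A i j))"
      by (simp add: sums_def)
    have "0 \<le> X k" for k
    proof -
      have "X k = of_real (1 / fact k) * quad_form N c (\<lambda>i j. A i j ^ k)"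
        unfolding X_def quad_form_scale[symmetric] by (simp add: scaleR_conv_of_real field_simps)
      moreover have "0 \<le> (of_real (1 / fact k) :: complex)"
        unfolding less_eq_complex_def Re_complex_of_real Im_complex_of_real by simp
      ultimately show ?thesis
        using pos_semidef_nonneg[OF pos_semidef_power[OF A]] by (simp only: mult_nonneg_nonneg)
    qed
    then have "quad_form N c (\<lambda>i j. exp (A i j)) \<in> {z. 0 \<le> z}"
      by (intro Lim_in_closed_set[OF closed_complex_nonneg _ _ lim]) (simp_all add: sum_nonneg)
    then show ?thesis
      by simp
  qed
  ultimately show ?thesis
    by (simp add: pos_semidef_def)
qed

text \<open>Recentring \<open>K\<close> at the last index gives a kernel
  whose form at \<open>c\<close> is the form of \<open>K\<close> at a zero-sum vector; the exponential of the recentred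
  kernel is positive semidefinite, and \<open>exp K\<close> differs from it by a congruence.\<close>
theorem cond_pos_semidef_exp:
  assumes K: "cond_pos_semidef N K"
  shows "pos_semidef N (\<lambda>i j. exp (K i j))"
proof (cases N)
  case 0
  then show ?thesis
    by (simp add: pos_semidef_def hermitian_kernel_def quad_form_def)
next
  case (Suc M)
  have herm: "K j i = cnj (K i j)" if "i < Suc M" "j < Suc M" for i j
    using hermitian_kernelD[OF cond_pos_semidef_hermitian[OF K]] that Suc by blast
  define L where "L i j = K i j - K i M - K M j + K M M" for i j
  have L_psd: "pos_semidef (Suc M) L"
  proof -
    have "hermitian_kernel (Suc M) L"
    proof (rule hermitian_kernelI)
      fix i j assume "i < Suc M" "j < Suc M"
      then show "L j i = cnj (L i j)"
        using herm[of i j] herm[of i M] herm[of M j] herm[of M M] by (simp add: L_def)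
    qed
    moreover have "0 \<le> quad_form (Suc M) c L" for c
    proof -
      define s where "s = sum c {..<M}"
      have "quad_form (Suc M) c L = quad_form M c L"
        by (simp add: quad_form_Suc L_def)
      also have "\<dots> = quad_form (Suc M) (c(M := - s)) K"
        unfolding L_def
        by (simp only: quad_form_Suc fun_upd_same quad_form_fun_upd_outside order_refl
            quad_form_add quad_form_diff quad_form_row quad_form_col)
           (simp add: s_def algebra_simps flip: sum_distrib_right)
      finally show ?thesis
        using cond_pos_semidef_nonneg[OF K] Suc by (simp add: s_def)
    qed
    ultimately show ?thesis
      by (simp add: pos_semidef_def)
  qed
  have "hermitian_kernel N (\<lambda>i j. exp (K i j))"
  proof (rule hermitian_kernelI)
    fix i j assume "i < N" "j < N"
    then show "exp (K j i) = cnj (exp (K i j))"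
      using herm[of i j] Suc by (simp add: exp_cnj)
  qed
  moreover have "0 \<le> quad_form N a (\<lambda>i j. exp (K i j))" for a
  proof -
    have KMM: "K M M = of_real (Re (K M M))"
      using herm[of M M] by (simp add: complex_eq_iff)
    have "quad_form (Suc M) a (\<lambda>i j. exp (K i j))
        = exp (- K M M) * quad_form (Suc M) (\<lambda>i. a i * exp (K i M)) (\<lambda>i j. exp (L i j))"
      unfolding quad_form_mult_coeffs quad_form_scale[symmetric]
    proof (rule quad_form_cong)
      fix i j assume "i < Suc M" "j < Suc M"
      then have "cnj (exp (K j M)) = exp (K M j)"
        using herm[of j M] by (simp add: exp_cnj)
      then show "exp (K i j) = exp (- K M M) * (exp (K i M) * cnj (exp (K j M)) * exp (L i j))"
        by (simp add: L_def exp_add exp_diff exp_minus field_simps)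
    qed
    moreover have "exp (- K M M) = of_real (exp (- Re (K M M)))"
      by (subst KMM) (simp only: exp_of_real of_real_minus[symmetric])
    then have "0 \<le> exp (- K M M)"
      by (simp add: less_eq_complex_def)
    ultimately show ?thesis
      using pos_semidef_nonneg[OF pos_semidef_exp[OF L_psd]] Suc by simp
  qed
  ultimately show ?thesis
    by (simp add: pos_semidef_def)
qed

lemma integral_nonneg_complex:
  fixes F :: "'a \<Rightarrow> complex"
  assumes "\<And>x. x \<in> space M \<Longrightarrow> 0 \<le> F x"
  shows "0 \<le> integral\<^sup>L M F"
proof -
  have "integral\<^sup>L M F = integral\<^sup>L M (\<lambda>x. of_real (Re (F x)))"
    using assms by (intro Bochner_Integration.integral_cong) (auto simp: less_eq_complex_def complex_eq_iff)
  then show ?thesis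
    using assms by (simp add: less_eq_complex_def)
qed

lemma quad_form_integral:
  assumes "\<And>i j. i < N \<Longrightarrow> j < N \<Longrightarrow> integrable M (\<lambda>x. K x i j)"
  shows "quad_form N c (\<lambda>i j. \<integral>x. K x i j \<partial>M) = (\<integral>x. quad_form N c (K x) \<partial>M)"
proof -
  have "(\<integral>x. quad_form N c (K x) \<partial>M) = (\<Sum>i<N. \<integral>x. (\<Sum>j<N. c i * cnj (c j) * K x i j) \<partial>M)"
    unfolding quad_form_def using assms
    by (intro Bochner_Integration.integral_sum Bochner_Integration.integrable_sum
        Bochner_Integration.integrable_mult_right) auto
  also have "\<dots> = quad_form N c (\<lambda>i j. \<integral>x. K x i j \<partial>M)"
    unfolding quad_form_def using assms
    by (intro sum.cong refl) (simp add: Bochner_Integration.integral_sum)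
  finally show ?thesis ..
qed

lemma cond_pos_semidef_integral:
  assumes int: "\<And>i j. i < N \<Longrightarrow> j < N \<Longrightarrow> integrable M (\<lambda>x. K x i j)"
    and K: "\<And>x. x \<in> space M \<Longrightarrow> cond_pos_semidef N (K x)"
  shows "cond_pos_semidef N (\<lambda>i j. \<integral>x. K x i j \<partial>M)"
proof -
  have "hermitian_kernel N (\<lambda>i j. \<integral>x. K x i j \<partial>M)"
  proof (rule hermitian_kernelI)
    fix i j assume "i < N" "j < N"
    then have "(\<integral>x. K x j i \<partial>M) = (\<integral>x. cnj (K x i j) \<partial>M)"
      using K by (intro Bochner_Integration.integral_cong)
        (auto intro: hermitian_kernelD cond_pos_semidef_hermitian)
    then show "(\<integral>x. K x j i \<partial>M) = cnj (\<integral>x. K x i j \<partial>M)"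
      by simp
  qed
  moreover have "0 \<le> quad_form N c (\<lambda>i j. \<integral>x. K x i j \<partial>M)" if "sum c {..<N} = 0" for c
    using K that
    by (subst quad_form_integral[OF int]) (auto intro!: integral_nonneg_complex cond_pos_semidef_nonneg)
  ultimately show ?thesis
    by (simp add: cond_pos_semidef_def)
qed

definition levy_jump :: "real \<Rightarrow> real \<Rightarrow> complex" where
  "levy_jump \<omega> a = exp (\<i> * of_real a * of_real \<omega>) - 1
                   - \<i> * of_real \<omega> * of_real a * of_real (indicator {a. \<bar>a\<bar> < 1} a)"

lemma levy_exponentE:
  assumes "levy_exponent f"
  obtains \<mu> \<sigma>2 V where "\<sigma>2 \<ge> 0" "levy_measure V"
    "\<And>\<omega>. f \<omega> = \<i> * of_real \<mu> * of_real \<omega> - of_real (\<sigma>2 * \<omega>\<^sup>2 / 2) + (\<integral>a. levy_jump \<omega> a \<partial>V)"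
  using assms unfolding levy_exponent_def levy_jump_def by blast

lemma levy_jump_bound: "cmod (levy_jump \<omega> a) \<le> (2 + \<omega>\<^sup>2) * min 1 (a\<^sup>2)"
proof (cases "\<bar>a\<bar> < 1")
  case True
  have "levy_jump \<omega> a = iexp (a * \<omega>) - (\<Sum>k\<le>1. (\<i> * of_real (a * \<omega>)) ^ k / fact k)"
    unfolding levy_jump_def using True by (simp add: algebra_simps)
  then have "cmod (levy_jump \<omega> a) \<le> \<bar>a * \<omega>\<bar> ^ 2 / 2"
    using iexp_approx1[of "a * \<omega>" 1] by (simp add: numeral_2_eq_2)
  also have "\<dots> = a\<^sup>2 * \<omega>\<^sup>2 / 2"
    by (simp add: power_mult_distrib)
  also have "\<dots> \<le> (2 + \<omega>\<^sup>2) * a\<^sup>2"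
    by (simp add: ring_distribs mult.commute)
  also have "a\<^sup>2 < 1"
    using True abs_square_less_1 by blast
  then have "a\<^sup>2 = min 1 (a\<^sup>2)"
    by (simp add: min_def)
  finally show ?thesis .
next
  case False
  have "levy_jump \<omega> a = iexp (a * \<omega>) - (\<Sum>k\<le>0. (\<i> * of_real (a * \<omega>)) ^ k / fact k)"
    unfolding levy_jump_def using False by (simp add: mult.assoc)
  then have "cmod (levy_jump \<omega> a) \<le> 2"
    using iexp_approx2[of "a * \<omega>" 0] by simp
  also have "\<not> a\<^sup>2 < 1"
    using False abs_square_less_1 by blast
  then have "2 \<le> (2 + \<omega>\<^sup>2) * min 1 (a\<^sup>2)"
    by (simp add: min_def)
  finally show ?thesis .
qed

lemma levy_jump_integrable:
  assumes "levy_measure V"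
  shows "integrable V (levy_jump \<omega>)"
proof -
  have sets: "sets V = sets borel"
    using assms unfolding levy_measure_def by simp
  have "(\<lambda>a. min 1 (a\<^sup>2)) \<in> borel_measurable V"
    unfolding measurable_cong_sets[OF sets refl] by measurable
  then have "integrable V (\<lambda>a. min 1 (a\<^sup>2::real))"
    using assms unfolding levy_measure_def by (intro integrableI_nonneg) auto
  then have "integrable V (\<lambda>a. (2 + \<omega>\<^sup>2) * min 1 (a\<^sup>2::real))"
    by simp
  moreover have "levy_jump \<omega> \<in> borel_measurable V"
    unfolding measurable_cong_sets[OF sets refl] levy_jump_def by measurable
  ultimately show ?thesis
    by (rule Bochner_Integration.integrable_bound) (auto intro: order.trans[OF levy_jump_bound])
qed

lemma levy_jump_uminus: "levy_jump (- \<omega>) a = cnj (levy_jump \<omega> a)"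
  by (simp add: levy_jump_def exp_cnj)

lemma levy_exponent_uminus:
  assumes "levy_exponent f"
  shows "f (- \<omega>) = cnj (f \<omega>)"
  using assms by (elim levy_exponentE) (simp add: levy_jump_uminus)

text \<open>With \<open>e\<^sub>i = exp (j a x\<^sub>i)\<close> the jump kernel is \<open>e\<^sub>i cnj e\<^sub>j\<close> plus a kernel of the form
  \<open>X\<^sub>i + Y\<^sub>j\<close>, which zero-sum coefficients annihilate.\<close>
lemma cond_pos_semidef_levy_jump: "cond_pos_semidef N (\<lambda>i j. levy_jump (x i - x j) a)"
proof -
  define e where "e i = exp (\<i> * of_real a * of_real (x i))" for i
  define k where "k = \<i> * of_real a * of_real (indicator {a. \<bar>a\<bar> < 1} a :: real)"
  have jump: "levy_jump (x i - x j) a = e i * cnj (e j) + ((- 1 - k * x i) + k * x j)" for i j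
  proof -
    have "exp (\<i> * of_real a * of_real (x i - x j))
        = exp (\<i> * of_real a * of_real (x i) + - (\<i> * of_real a * of_real (x j)))"
      by (simp add: algebra_simps)
    also have "\<dots> = e i * cnj (e j)"
      unfolding exp_add e_def by (simp add: exp_cnj)
    finally show ?thesis
      unfolding levy_jump_def k_def by (simp add: algebra_simps)
  qed
  have "hermitian_kernel N (\<lambda>i j. levy_jump (x i - x j) a)"
    by (rule hermitian_kernelI) (simp flip: levy_jump_uminus)
  moreover have "quad_form N c (\<lambda>i j. levy_jump (x i - x j) a)
      = (\<Sum>i<N. c i * e i) * cnj (\<Sum>i<N. c i * e i)" if "sum c {..<N} = 0" for c
    by (simp only: jump quad_form_add quad_form_rank_one quad_form_row quad_form_col
        that complex_cnj_zero mult_zero_left mult_zero_right add_0_right)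
  ultimately show ?thesis
    by (simp add: cond_pos_semidef_def mult_cnj_nonneg del: cnj_sum)
qed

lemma levy_exponent_cond_pos_semidef:
  assumes f: "levy_exponent f"
  shows "cond_pos_semidef N (\<lambda>i j. f (x i - x j))"
proof -
  obtain \<mu> \<sigma>2 V where "\<sigma>2 \<ge> 0" and V: "levy_measure V" and
    f_eq: "\<And>\<omega>. f \<omega> = \<i> * of_real \<mu> * of_real \<omega> - of_real (\<sigma>2 * \<omega>\<^sup>2 / 2) + (\<integral>a. levy_jump \<omega> a \<partial>V)"
    using levy_exponentE[OF f] by metis
  define X where "X i = complex_of_real (x i)" for i
  define J where "J i j = (\<integral>a. levy_jump (x i - x j) a \<partial>V)" for i j
  have J: "cond_pos_semidef N J"
    unfolding J_def
    by (intro cond_pos_semidef_integral levy_jump_integrable[OF V] cond_pos_semidef_levy_jump)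
  have decomp: "f (x i - x j) = of_real \<sigma>2 * (X i * cnj (X j))
      + ((\<i> * of_real \<mu> * X i - of_real (\<sigma>2 / 2) * X i ^ 2)
        + (- \<i> * of_real \<mu> * X j - of_real (\<sigma>2 / 2) * X j ^ 2)) + J i j" for i j
    unfolding f_eq X_def J_def by (simp add: power2_eq_square field_simps)
  have "hermitian_kernel N (\<lambda>i j. f (x i - x j))"
    by (rule hermitian_kernelI) (simp flip: levy_exponent_uminus[OF f])
  moreover have "0 \<le> quad_form N c (\<lambda>i j. f (x i - x j))" if "sum c {..<N} = 0" for c
  proof -
    have "quad_form N c (\<lambda>i j. f (x i - x j))
        = of_real \<sigma>2 * ((\<Sum>i<N. c i * X i) * cnj (\<Sum>i<N. c i * X i)) + quad_form N c J"
      by (simp only: decomp quad_form_add quad_form_scale quad_form_rank_one quad_form_row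
          quad_form_col that complex_cnj_zero mult_zero_left mult_zero_right add_0_right)
    then show ?thesis
      using \<open>\<sigma>2 \<ge> 0\<close> cond_pos_semidef_nonneg[OF J that]
      by (simp add: mult_cnj_nonneg less_eq_complex_def del: cnj_sum)
  qed
  ultimately show ?thesis
    by (simp add: cond_pos_semidef_def)
qed

lemma abs_diff_powr_le:
  fixes u v p :: real
  assumes "p > 0"
  shows "\<bar>u - v\<bar> powr p \<le> 2 powr p * (\<bar>u\<bar> powr p + \<bar>v\<bar> powr p)"
proof -
  define m where "m = max \<bar>u\<bar> \<bar>v\<bar>"
  have "\<bar>u - v\<bar> powr p \<le> (2 * m) powr p"
    using assms unfolding m_def by (intro powr_mono2) auto
  also have "\<dots> = 2 powr p * m powr p"
    unfolding m_def by (simp add: powr_mult)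
  also have "m powr p \<le> \<bar>u\<bar> powr p + \<bar>v\<bar> powr p"
    unfolding m_def by (simp add: max_def)
  finally show ?thesis
    by simp
qed

lemma Lp_space_diff:
  assumes "p > 0" "\<phi> \<in> Lp_space p" "\<psi> \<in> Lp_space p"
  shows "\<phi> - \<psi> \<in> Lp_space p"
proof -
  have meas: "\<phi> \<in> borel_measurable lborel" "\<psi> \<in> borel_measurable lborel"
    and "integrable lborel (\<lambda>x. \<bar>\<phi> x\<bar> powr p)" "integrable lborel (\<lambda>x. \<bar>\<psi> x\<bar> powr p)"
    using assms unfolding Lp_space_def by auto
  then have "integrable lborel (\<lambda>x. 2 powr p * (\<bar>\<phi> x\<bar> powr p + \<bar>\<psi> x\<bar> powr p))"
    by simp
  moreover have "(\<lambda>x. \<bar>\<phi> x - \<psi> x\<bar> powr p) \<in> borel_measurable lborel"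
    using meas by measurable
  ultimately have "integrable lborel (\<lambda>x. \<bar>\<phi> x - \<psi> x\<bar> powr p)"
    by (rule Bochner_Integration.integrable_bound)
      (auto intro!: order.trans[OF _ abs_ge_self] abs_diff_powr_le \<open>p > 0\<close>)
  with meas show ?thesis
    unfolding Lp_space_def fun_diff_def by simp
qed

lemma dirderiv_diff:
  fixes g h :: "'a::euclidean_space \<Rightarrow> real"
  assumes "g differentiable (at x)" "h differentiable (at x)"
  shows "dirderiv b (\<lambda>y. g y - h y) x = dirderiv b g x - dirderiv b h x"
proof -
  have line: "(\<lambda>t. x + t *\<^sub>R b) differentiable (at 0)"
    by (intro differentiable_add differentiable_const differentiable_scaleR differentiable_ident)
  have "(\<lambda>t. g (x + t *\<^sub>R b)) differentiable (at 0)" "(\<lambda>t. h (x + t *\<^sub>R b)) differentiable (at 0)"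
    using differentiable_compose[of _ "\<lambda>t. x + t *\<^sub>R b" 0 UNIV] assms line by simp_all
  then have "(\<lambda>t. g (x + t *\<^sub>R b)) field_differentiable (at 0)"
    "(\<lambda>t. h (x + t *\<^sub>R b)) field_differentiable (at 0)"
    by (simp_all add: field_differentiable_def real_differentiable_def)
  then show ?thesis
    unfolding dirderiv_def by simp
qed

lemma pderivs_diff:
  assumes "\<And>bs x. set bs \<subseteq> Basis \<Longrightarrow> pderivs bs \<phi> differentiable (at x)"
    and "\<And>bs x. set bs \<subseteq> Basis \<Longrightarrow> pderivs bs \<psi> differentiable (at x)"
    and "set bs \<subseteq> Basis"
  shows "pderivs bs (\<lambda>x. \<phi> x - \<psi> x) = (\<lambda>x. pderivs bs \<phi> x - pderivs bs \<psi> x)"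
  using assms(3) by (induction bs) (auto simp: dirderiv_diff assms(1,2))

lemma schwartz_space_diff:
  assumes "\<phi> \<in> schwartz_space" "\<psi> \<in> schwartz_space"
  shows "\<phi> - \<psi> \<in> schwartz_space"
proof -
  have d: "\<And>bs x. set bs \<subseteq> Basis \<Longrightarrow> pderivs bs \<phi> differentiable (at x)"
    "\<And>bs x. set bs \<subseteq> Basis \<Longrightarrow> pderivs bs \<psi> differentiable (at x)"
    and b: "\<And>k bs. set bs \<subseteq> Basis \<Longrightarrow> bounded (range (\<lambda>x. (1 + norm x) ^ k * pderivs bs \<phi> x))"
    "\<And>k bs. set bs \<subseteq> Basis \<Longrightarrow> bounded (range (\<lambda>x. (1 + norm x) ^ k * pderivs bs \<psi> x))"
    using assms unfolding schwartz_space_def by auto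
  have "bounded (range (\<lambda>x. (1 + norm x) ^ k * (pderivs bs \<phi> x - pderivs bs \<psi> x)))"
    if bs: "set bs \<subseteq> Basis" for k bs
  proof -
    obtain B1 where B1: "\<And>x. norm ((1 + norm x) ^ k * pderivs bs \<phi> x) \<le> B1"
      using b(1)[OF bs] unfolding bounded_iff by blast
    obtain B2 where B2: "\<And>x. norm ((1 + norm x) ^ k * pderivs bs \<psi> x) \<le> B2"
      using b(2)[OF bs] unfolding bounded_iff by blast
    have "norm ((1 + norm x) ^ k * (pderivs bs \<phi> x - pderivs bs \<psi> x)) \<le> B1 + B2" for x
      using norm_triangle_ineq4[of "(1 + norm x) ^ k * pderivs bs \<phi> x" "(1 + norm x) ^ k * pderivs bs \<psi> x"]
        B1[of x] B2[of x]
      by (simp add: right_diff_distrib)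
    then show ?thesis
      unfolding bounded_iff by blast
  qed
  then show ?thesis
    using d unfolding schwartz_space_def fun_diff_def
    by (auto simp: pderivs_diff[OF d] intro: differentiable_diff)
qed

lemma test_space_diff: "test_space T conv \<Longrightarrow> \<phi> \<in> T \<Longrightarrow> \<psi> \<in> T \<Longrightarrow> \<phi> - \<psi> \<in> T"
  unfolding test_space_def using schwartz_space_diff Lp_space_diff by auto

theorem proposition3p4:
  fixes f :: "real \<Rightarrow> complex"
    and T :: "('a::euclidean_space \<Rightarrow> real) set"
    and conv :: "(nat \<Rightarrow> 'a \<Rightarrow> real) \<Rightarrow> ('a \<Rightarrow> real) \<Rightarrow> bool"
  assumes "test_space T conv"
    and "levy_exponent f"
    and "\<And>\<phi>. \<phi> \<in> T \<Longrightarrow> integrable lborel (\<lambda>r. f (\<phi> r))"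
    and "seq_continuous_on T conv (char_functional f)"
  shows "\<forall>N::nat. \<forall>a::nat \<Rightarrow> complex. \<forall>\<phi>::nat \<Rightarrow> 'a \<Rightarrow> real.
           (\<forall>i<N. \<phi> i \<in> T) \<longrightarrow>
           (let S = (\<Sum>i<N. \<Sum>j<N. a i * cnj (a j) * char_functional f (\<phi> i - \<phi> j))
            in Im S = 0 \<and> Re S \<ge> 0)"
proof (intro allI impI)
  fix N :: nat and a :: "nat \<Rightarrow> complex" and \<phi> :: "nat \<Rightarrow> 'a \<Rightarrow> real"
  assume \<phi>: "\<forall>i<N. \<phi> i \<in> T"
  define K where "K i j = (\<integral>r. f (\<phi> i r - \<phi> j r) \<partial>lborel)" for i j
  have "cond_pos_semidef N K"
    unfolding K_def
  proof (rule cond_pos_semidef_integral)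
    show "integrable lborel (\<lambda>r. f (\<phi> i r - \<phi> j r))" if "i < N" "j < N" for i j
      using assms(3)[OF test_space_diff[OF assms(1)]] \<phi> that by (simp add: fun_diff_def)
    show "cond_pos_semidef N (\<lambda>i j. f (\<phi> i r - \<phi> j r))" for r
      using levy_exponent_cond_pos_semidef[OF assms(2)] .
  qed
  then have "0 \<le> quad_form N a (\<lambda>i j. exp (K i j))"
    by (intro pos_semidef_nonneg cond_pos_semidef_exp)
  then show "let S = (\<Sum>i<N. \<Sum>j<N. a i * cnj (a j) * char_functional f (\<phi> i - \<phi> j))
             in Im S = 0 \<and> Re S \<ge> 0"
    by (simp add: quad_form_def K_def char_functional_def fun_diff_def less_eq_complex_def)
qed

end
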